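(* For every set of formulas $\Gamma$ and formula $\phi$: if $\Gamma\models_{\mathbf{CK}}\phi$ then $\Gamma\vdash_{\mathbf{CK}}\phi$.
   Context: Formulas: built from propositional variables and the constant $\bot$ using $\lnot$, the binary connectives $\supset,\land,\lor$, and two binary conditional operators $[\phi]\psi$ and $\langle\phi\rangle\psi$ (treated as primitive by tableau rules). $\top$ abbreviates $\lnot\bot$. Segerberg model: $M=\langle U,P,R,V\rangle$ with $U\neq\emptyset$, $P\subseteq\wp(U)$, $R:P\to\wp(U\times U)$, $V:\mathrm{Var}\to P$, such that $\emptyset,U\in P$; $P$ is closed under complement, binary intersection and union; and for $S,T\in P$, $\{x\in U\mid R_S(x)\subseteq T\}\in P$, where $R_S=R(S)$ and $R_S(x)=\{y\mid (x,y)\in R_S\}$. Truth: $M,x\not\models\bot$; $M,x\models p$ iff $x\in V(p)$; Boolean connectives as usual; $M,x\models[\phi]\psi$ iff $M,y\models\psi$ for all $y\in R_\phi(x)$; $M,x\models\langle\phi\rangle\psi$ iff $M,y\models\psi$ for some $y\in R_\phi(x)$; here $\|\phi\|=\{x\mid M,x\models\phi\}$ (which lies in $P$) and $R_\phi=R_{\|\phi\|}$. $\Gamma\models_{\mathbf{CK}}\phi$ iff for every Segerberg model $M$ and $x\in U$ with $M,x\models\psi$ for all $\psi\in\Gamma$, $M,x\models\phi$. Tableaux: indices are positive integers. Prefixed formulas are expressions $i:\phi$ and $i\,r_\phi\,j$. For a set $\Gamma$ of formulas and a formula $\phi$, a tableau for $(\Gamma,\phi)$ is a finite downward-branching tree labelled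 by prefixed formulas, each of which is either an assumption ($1:\psi$ with $\psi\in\Gamma$, or $1:\lnot\phi$) or obtained by applying a branch extension rule to prefixed formulas on its branch; applying a non-branching rule appends its conclusions to the branch, applying a branching rule splits the branch into one child branch per alternative, each alternative appending its listed conclusions. A branch is closed if it contains $i:\chi$ and $i:\lnot\chi$ for some $i,\chi$, or contains $i:\bot$; a tableau is closed if all branches are closed. $\Gamma\vdash_X\phi$ means there is a closed $X$-tableau for $(\Gamma,\phi)$. Basic ($\mathbf{Ck}$) rules: from $i:\phi\land\psi$ add $i:\phi,i:\psi$; from $i:\lnot(\phi\land\psi)$ branch into $i:\lnot\phi\mid i:\lnot\psi$; from $i:\phi\lor\psi$ branch into $i:\phi\mid i:\psi$; from $i:\lnot(\phi\lor\psi)$ add $i:\lnot\phi,i:\lnot\psi$; from $i:\phi\supset\psi$ branch into $i:\lnot\phi\mid i:\psi$; from $i:\lnot(\phi\supset\psi)$ add $i:\phi,i:\lnot\psi$; from $i:\lnot\lnot\phi$ add $i:\phi$; ($\Box$) from $i:[\phi]\psi$ and $i\,r_\phi\,j$ add $j:\psi$; ($\lnot\Box$) from $i:\lnot[\phi]\psi$ add $i\,r_\phi\,j$ and $j:\lnot\psi$ with $j$ new to the branch; ($\Diamond$) from $i:\langle\phi\rangle\psi$ add $i\,r_\phi\,j$ and $j:\psi$ with $j$ new; ($\lnot\Diamond$) from $i:\lnot\langle\phi\rangle\psi$ and $i\,r_\phi\,j$ add $j:\lnot\psi$. (cut) for any index $i$ already on the branch and any formula $\phi$, branch into $i:\phi\mid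 i:\lnot\phi$. (ea) from $i\,r_\phi\,j$ and any formula $\psi$, branch into ($k:\lnot\phi$, $k:\psi$) $\mid$ ($k:\phi$, $k:\lnot\psi$) $\mid$ $i\,r_\psi\,j$, with $k$ new to the branch. $\mathbf{CK}$-tableaux use the basic rules, cut and ea. *)

theory Defs
  imports Main
begin

datatype fm =
    Var nat
  | Bot
  | Neg fm
  | Imp fm fm
  | And fm fm
  | Or fm fm
  | Box fm fm
  | Dia fm fm

abbreviation Top :: fm where "Top \<equiv> Neg Bot"

definition segerberg_model ::
  "'w set \<Rightarrow> 'w set set \<Rightarrow> ('w set \<Rightarrow> ('w \<times> 'w) set) \<Rightarrow> (nat \<Rightarrow> 'w set) \<Rightarrow> bool" where
  "segerberg_model U P R V \<longleftrightarrow>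
     U \<noteq> {} \<and> P \<subseteq> Pow U \<and> (\<forall>S\<in>P. R S \<subseteq> U \<times> U) \<and> (\<forall>p. V p \<in> P) \<and>
     {} \<in> P \<and> U \<in> P \<and>
     (\<forall>S\<in>P. U - S \<in> P) \<and>
     (\<forall>S\<in>P. \<forall>T\<in>P. S \<inter> T \<in> P \<and> S \<union> T \<in> P) \<and>
     (\<forall>S\<in>P. \<forall>T\<in>P. {x \<in> U. R S `` {x} \<subseteq> T} \<in> P)"

primrec sat ::
  "'w set \<Rightarrow> ('w set \<Rightarrow> ('w \<times> 'w) set) \<Rightarrow> (nat \<Rightarrow> 'w set) \<Rightarrow> fm \<Rightarrow> 'w \<Rightarrow> bool" where
  "sat U R V (Var p) x = (x \<in> V p)"
| "sat U R V Bot x = False"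
| "sat U R V (Neg a) x = (\<not> sat U R V a x)"
| "sat U R V (Imp a b) x = (sat U R V a x \<longrightarrow> sat U R V b x)"
| "sat U R V (And a b) x = (sat U R V a x \<and> sat U R V b x)"
| "sat U R V (Or a b) x = (sat U R V a x \<or> sat U R V b x)"
| "sat U R V (Box a b) x =
     (\<forall>y. (x, y) \<in> R {z \<in> U. sat U R V a z} \<longrightarrow> sat U R V b y)"
| "sat U R V (Dia a b) x =
     (\<exists>y. (x, y) \<in> R {z \<in> U. sat U R V a z} \<and> sat U R V b y)"

definition ck_entails :: "'w itself \<Rightarrow> fm set \<Rightarrow> fm \<Rightarrow> bool" where
  "ck_entails (_ :: 'w itself) \<Gamma> \<phi> \<longleftrightarrow>
     (\<forall>(U :: 'w set) P R V. segerberg_model U P R V \<longrightarrow>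
        (\<forall>x\<in>U. (\<forall>\<psi>\<in>\<Gamma>. sat U R V \<psi> x) \<longrightarrow> sat U R V \<phi> x))"

datatype pfm =
    PF nat fm
  | Rel nat fm nat

definition indices :: "pfm set \<Rightarrow> nat set" where
  "indices B = {i. \<exists>a. PF i a \<in> B} \<union> {i. \<exists>a j. Rel i a j \<in> B} \<union> {j. \<exists>i a. Rel i a j \<in> B}"

definition closed_branch :: "pfm set \<Rightarrow> bool" where
  "closed_branch B \<longleftrightarrow> (\<exists>i c. PF i c \<in> B \<and> PF i (Neg c) \<in> B) \<or> (\<exists>i. PF i Bot \<in> B)"

text \<open>ck_step B Cs: a CK rule (basic rules, cut, ea) is applicable to prefixed formulas on
  branch B, and its alternatives (one per child branch) are the conclusion sets in Cs.\<close>
inductive ck_step :: "pfm set \<Rightarrow> pfm set list \<Rightarrow> bool" where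
  and_r:    "PF i (And a b) \<in> B \<Longrightarrow> ck_step B [{PF i a, PF i b}]"
| nand_r:   "PF i (Neg (And a b)) \<in> B \<Longrightarrow> ck_step B [{PF i (Neg a)}, {PF i (Neg b)}]"
| or_r:     "PF i (Or a b) \<in> B \<Longrightarrow> ck_step B [{PF i a}, {PF i b}]"
| nor_r:    "PF i (Neg (Or a b)) \<in> B \<Longrightarrow> ck_step B [{PF i (Neg a), PF i (Neg b)}]"
| imp_r:    "PF i (Imp a b) \<in> B \<Longrightarrow> ck_step B [{PF i (Neg a)}, {PF i b}]"
| nimp_r:   "PF i (Neg (Imp a b)) \<in> B \<Longrightarrow> ck_step B [{PF i a, PF i (Neg b)}]"
| nneg_r:   "PF i (Neg (Neg a)) \<in> B \<Longrightarrow> ck_step B [{PF i a}]"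
| box_r:    "PF i (Box a b) \<in> B \<Longrightarrow> Rel i a j \<in> B \<Longrightarrow> ck_step B [{PF j b}]"
| nbox_r:   "PF i (Neg (Box a b)) \<in> B \<Longrightarrow> j \<notin> indices B \<Longrightarrow> 0 < j \<Longrightarrow>
             ck_step B [{Rel i a j, PF j (Neg b)}]"
| dia_r:    "PF i (Dia a b) \<in> B \<Longrightarrow> j \<notin> indices B \<Longrightarrow> 0 < j \<Longrightarrow>
             ck_step B [{Rel i a j, PF j b}]"
| ndia_r:   "PF i (Neg (Dia a b)) \<in> B \<Longrightarrow> Rel i a j \<in> B \<Longrightarrow> ck_step B [{PF j (Neg b)}]"
| cut_r:    "i \<in> indices B \<Longrightarrow> ck_step B [{PF i a}, {PF i (Neg a)}]"
| ea_r:     "Rel i a j \<in> B \<Longrightarrow> k \<notin> indices B \<Longrightarrow> 0 < k \<Longrightarrow>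
             ck_step B [{PF k (Neg a), PF k b}, {PF k a, PF k (Neg b)}, {Rel i b j}]"

definition assumption_pf :: "fm set \<Rightarrow> fm \<Rightarrow> pfm \<Rightarrow> bool" where
  "assumption_pf \<Gamma> \<phi> x \<longleftrightarrow> (\<exists>\<psi>\<in>\<Gamma>. x = PF 1 \<psi>) \<or> x = PF 1 (Neg \<phi>)"

text \<open>closable \<Gamma> \<phi> B: the branch B (set of prefixed formulas on it) can be extended to a
  finite tableau fragment all of whose branches are closed, where each node added is an
  assumption for (\<Gamma>, \<phi>) or the result of a CK rule application.\<close>
inductive closable :: "fm set \<Rightarrow> fm \<Rightarrow> pfm set \<Rightarrow> bool" for \<Gamma> \<phi> where
  cl_closed: "closed_branch B \<Longrightarrow> closable \<Gamma> \<phi> B"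
| cl_assm:   "assumption_pf \<Gamma> \<phi> x \<Longrightarrow> closable \<Gamma> \<phi> (insert x B) \<Longrightarrow> closable \<Gamma> \<phi> B"
| cl_rule:   "ck_step B Cs \<Longrightarrow> (\<forall>C\<in>set Cs. closable \<Gamma> \<phi> (B \<union> C)) \<Longrightarrow> closable \<Gamma> \<phi> B"

definition ck_derivable :: "fm set \<Rightarrow> fm \<Rightarrow> bool" where
  "ck_derivable \<Gamma> \<phi> \<longleftrightarrow> closable \<Gamma> \<phi> {}"

end

theory Submission
  imports Defs "HOL-Library.Countable"
begin

text \<open>If no closed tableau exists, a fair enumeration of all rule applications, always choosing
  an alternative that stays non-closable, yields in the limit a consistent branch saturated under
  every CK rule and containing the assumptions. Its indices form the worlds of a Segerberg model
  whose admissible sets are the truth sets of formulas; rule ea guarantees that the accessibility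
  of a prefix depends only on the truth set of the formula, so the branch is exactly the set of
  true prefixed formulas and refutes the consequence.\<close>

instance fm :: countable by countable_datatype

lemma indices_mono: "B \<subseteq> B' \<Longrightarrow> indices B \<subseteq> indices B'"
  unfolding indices_def by blast

lemma finite_indices: "finite B \<Longrightarrow> finite (indices B)"
proof -
  assume "finite B"
  moreover have "indices B \<subseteq> (\<lambda>x. case x of PF i a \<Rightarrow> i | Rel i a j \<Rightarrow> i) ` B
      \<union> (\<lambda>x. case x of PF i a \<Rightarrow> i | Rel i a j \<Rightarrow> j) ` B"
    unfolding indices_def by force
  ultimately show ?thesis by (meson finite_UnI finite_imageI finite_subset)
qed

definition fresh_index :: "pfm set \<Rightarrow> nat" where
  "fresh_index B = Suc (Max (insert 0 (indices B)))"

lemma fresh_index_notin: "finite B \<Longrightarrow> fresh_index B \<notin> indices B"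
  unfolding fresh_index_def by (metis Max_ge finite_indices finite_insert insertCI lessI not_le)

lemma fresh_index_pos: "0 < fresh_index B"
  by (simp add: fresh_index_def)

section \<open>Fair saturation of an open branch\<close>

datatype rule_app =
    AssmR fm | AndR nat fm fm | NandR nat fm fm | OrR nat fm fm | NorR nat fm fm
  | ImpR nat fm fm | NimpR nat fm fm | BoxR nat fm fm nat | NboxR nat fm fm
  | DiaR nat fm fm | NdiaR nat fm fm nat | CutR nat fm | EaR nat fm nat fm

instance rule_app :: countable by countable_datatype

fun alternatives :: "fm set \<Rightarrow> rule_app \<Rightarrow> pfm set \<Rightarrow> pfm set list option" where
  "alternatives G (AssmR p) B = (if p \<in> G then Some [{PF 1 p}] else None)"
| "alternatives G (AndR i a b) B =
     (if PF i (And a b) \<in> B then Some [{PF i a, PF i b}] else None)"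
| "alternatives G (NandR i a b) B =
     (if PF i (Neg (And a b)) \<in> B then Some [{PF i (Neg a)}, {PF i (Neg b)}] else None)"
| "alternatives G (OrR i a b) B =
     (if PF i (Or a b) \<in> B then Some [{PF i a}, {PF i b}] else None)"
| "alternatives G (NorR i a b) B =
     (if PF i (Neg (Or a b)) \<in> B then Some [{PF i (Neg a), PF i (Neg b)}] else None)"
| "alternatives G (ImpR i a b) B =
     (if PF i (Imp a b) \<in> B then Some [{PF i (Neg a)}, {PF i b}] else None)"
| "alternatives G (NimpR i a b) B =
     (if PF i (Neg (Imp a b)) \<in> B then Some [{PF i a, PF i (Neg b)}] else None)"
| "alternatives G (BoxR i a b j) B =
     (if PF i (Box a b) \<in> B \<and> Rel i a j \<in> B then Some [{PF j b}] else None)"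
| "alternatives G (NboxR i a b) B =
     (if PF i (Neg (Box a b)) \<in> B
      then Some [{Rel i a (fresh_index B), PF (fresh_index B) (Neg b)}] else None)"
| "alternatives G (DiaR i a b) B =
     (if PF i (Dia a b) \<in> B then Some [{Rel i a (fresh_index B), PF (fresh_index B) b}] else None)"
| "alternatives G (NdiaR i a b j) B =
     (if PF i (Neg (Dia a b)) \<in> B \<and> Rel i a j \<in> B then Some [{PF j (Neg b)}] else None)"
| "alternatives G (CutR i a) B =
     (if i \<in> indices B then Some [{PF i a}, {PF i (Neg a)}] else None)"
| "alternatives G (EaR i a j b) B =
     (if Rel i a j \<in> B
      then Some [{PF (fresh_index B) (Neg a), PF (fresh_index B) b},
                 {PF (fresh_index B) a, PF (fresh_index B) (Neg b)}, {Rel i b j}]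
      else None)"

lemma alternatives_finite: "alternatives G t B = Some Cs \<Longrightarrow> C \<in> set Cs \<Longrightarrow> finite C"
  by (cases t) (auto split: if_splits)

lemma alternatives_sound:
  assumes "finite B" "alternatives G t B = Some Cs"
  shows "ck_step B Cs \<or> (\<exists>x. assumption_pf G \<phi> x \<and> Cs = [{x}])"
proof (cases t)
  case (AssmR p)
  then show ?thesis using assms(2) by (auto simp: assumption_pf_def split: if_splits)
qed (use assms in \<open>auto split: if_splits intro!: disjI1 intro: ck_step.intros
       simp: fresh_index_notin fresh_index_pos\<close>)

lemma alternatives_keep_open:
  assumes "finite B" "alternatives G t B = Some Cs" "\<not> closable G \<phi> B"
  shows "\<exists>C\<in>set Cs. \<not> closable G \<phi> (B \<union> C)"
  using alternatives_sound[OF assms(1,2), of \<phi>] assms(3) cl_rule cl_assm by fastforce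

definition extend :: "fm set \<Rightarrow> fm \<Rightarrow> rule_app \<Rightarrow> pfm set \<Rightarrow> pfm set" where
  "extend G \<phi> t B = (case alternatives G t B of
     None \<Rightarrow> B
   | Some Cs \<Rightarrow> if \<exists>C\<in>set Cs. \<not> closable G \<phi> (B \<union> C)
                then B \<union> (SOME C. C \<in> set Cs \<and> \<not> closable G \<phi> (B \<union> C)) else B)"

lemma extend_open:
  assumes "finite B" "\<not> closable G \<phi> B"
  shows "finite (extend G \<phi> t B) \<and> \<not> closable G \<phi> (extend G \<phi> t B)"
proof (cases "alternatives G t B")
  case None
  then show ?thesis using assms by (simp add: extend_def)
next
  case (Some Cs)
  let ?C = "SOME C. C \<in> set Cs \<and> \<not> closable G \<phi> (B \<union> C)"
  have ex: "\<exists>C\<in>set Cs. \<not> closable G \<phi> (B \<union> C)"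
    using alternatives_keep_open[OF assms(1) Some assms(2)] .
  then have "?C \<in> set Cs \<and> \<not> closable G \<phi> (B \<union> ?C)"
    by (metis (mono_tags, lifting) someI_ex)
  then show ?thesis using assms ex alternatives_finite[OF Some] Some by (simp add: extend_def)
qed

lemma extend_realises:
  assumes "finite B" "\<not> closable G \<phi> B" "alternatives G t B = Some Cs"
  shows "\<exists>C\<in>set Cs. C \<subseteq> extend G \<phi> t B"
proof -
  let ?C = "SOME C. C \<in> set Cs \<and> \<not> closable G \<phi> (B \<union> C)"
  have ex: "\<exists>C\<in>set Cs. \<not> closable G \<phi> (B \<union> C)"
    using alternatives_keep_open[OF assms(1,3,2)] .
  then have "?C \<in> set Cs" by (metis (mono_tags, lifting) someI_ex)
  then show ?thesis using ex assms(3) by (auto simp: extend_def)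
qed

definition schedule :: "nat \<Rightarrow> rule_app" where
  "schedule n = from_nat (fst (prod_decode n))"

lemma schedule_infinitely_often: "\<exists>n\<ge>m. schedule n = t"
  by (rule exI[of _ "prod_encode (to_nat t, m)"]) (simp add: schedule_def le_prod_encode_2)

primrec branch :: "fm set \<Rightarrow> fm \<Rightarrow> nat \<Rightarrow> pfm set" where
  "branch G \<phi> 0 = {PF 1 (Neg \<phi>)}"
| "branch G \<phi> (Suc n) = extend G \<phi> (schedule n) (branch G \<phi> n)"

lemma branch_open:
  assumes "\<not> closable G \<phi> {}"
  shows "finite (branch G \<phi> n) \<and> \<not> closable G \<phi> (branch G \<phi> n)"
proof (induction n)
  case 0
  have "assumption_pf G \<phi> (PF 1 (Neg \<phi>))" by (simp add: assumption_pf_def)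
  then show ?case using assms cl_assm[of G \<phi> _ "{}"] by auto
qed (simp add: extend_open)

lemma branch_mono: "m \<le> n \<Longrightarrow> branch G \<phi> m \<subseteq> branch G \<phi> n"
  by (rule lift_Suc_mono_le[of "branch G \<phi>"]) (auto simp: extend_def split: option.splits)

definition limit_branch :: "fm set \<Rightarrow> fm \<Rightarrow> pfm set" where
  "limit_branch G \<phi> = (\<Union>n. branch G \<phi> n)"

lemma limit_branch_finite_subset:
  "finite X \<Longrightarrow> X \<subseteq> limit_branch G \<phi> \<Longrightarrow> \<exists>m. \<forall>n\<ge>m. X \<subseteq> branch G \<phi> n"
proof (induction X rule: finite_induct)
  case (insert x X)
  obtain m where m: "\<forall>n\<ge>m. X \<subseteq> branch G \<phi> n" using insert by blast
  obtain k where "x \<in> branch G \<phi> k" using insert.prems unfolding limit_branch_def by blast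
  have "insert x X \<subseteq> branch G \<phi> n" if "n \<ge> max m k" for n
    using m \<open>x \<in> branch G \<phi> k\<close> branch_mono[of k n G \<phi>] that by auto
  then show ?case by blast
qed simp

lemma limit_branch_realises:
  assumes "\<not> closable G \<phi> {}" and "finite X" "X \<subseteq> limit_branch G \<phi>"
    and applicable: "\<And>B. X \<subseteq> B \<Longrightarrow> alternatives G t B \<noteq> None"
  shows "\<exists>B Cs. alternatives G t B = Some Cs \<and> (\<exists>C\<in>set Cs. C \<subseteq> limit_branch G \<phi>)"
proof -
  obtain m where m: "\<forall>n\<ge>m. X \<subseteq> branch G \<phi> n"
    using limit_branch_finite_subset[OF assms(2,3)] by blast
  obtain n where n: "n \<ge> m" "schedule n = t" using schedule_infinitely_often by blast
  then obtain Cs where Cs: "alternatives G t (branch G \<phi> n) = Some Cs" using m applicable by blast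
  then obtain C where "C \<in> set Cs" "C \<subseteq> branch G \<phi> (Suc n)"
    using extend_realises[of "branch G \<phi> n" G \<phi> t Cs] branch_open[OF assms(1), of n] n(2)
    by auto
  then show ?thesis using Cs unfolding limit_branch_def by blast
qed

lemma limit_branch_not_closed:
  assumes "\<not> closable G \<phi> {}" "finite X" "X \<subseteq> limit_branch G \<phi>"
  shows "\<not> closed_branch X"
proof
  assume "closed_branch X"
  obtain m where "X \<subseteq> branch G \<phi> m" using limit_branch_finite_subset[OF assms(2,3)] by blast
  then have "closed_branch (branch G \<phi> m)" using \<open>closed_branch X\<close>
    unfolding closed_branch_def by blast
  then show False using branch_open[OF assms(1)] cl_closed by blast
qed

lemma limit_branch_realises_pair:
  assumes "\<not> closable G \<phi> {}" "x \<in> limit_branch G \<phi>" "y \<in> limit_branch G \<phi>"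
    and applicable: "\<And>B. x \<in> B \<Longrightarrow> y \<in> B \<Longrightarrow> alternatives G t B \<noteq> None"
  shows "\<exists>B Cs. alternatives G t B = Some Cs \<and> (\<exists>C\<in>set Cs. C \<subseteq> limit_branch G \<phi>)"
proof (rule limit_branch_realises[OF assms(1), of "{x, y}"])
  show "finite {x, y}" "{x, y} \<subseteq> limit_branch G \<phi>" using assms(2,3) by auto
  show "alternatives G t B \<noteq> None" if "{x, y} \<subseteq> B" for B
    using applicable that by simp
qed

lemma limit_branch_assumption:
  assumes "\<not> closable G \<phi> {}" "\<psi> \<in> G"
  shows "PF 1 \<psi> \<in> limit_branch G \<phi>"
  using limit_branch_realises[OF assms(1), of "{}" "AssmR \<psi>"] assms(2)
  by (auto split: if_splits)

section \<open>Hintikka sets and their canonical models\<close>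

locale ck_hintikka =
  fixes H :: "pfm set"
  assumes consistent: "PF i a \<in> H \<Longrightarrow> PF i (Neg a) \<notin> H"
    and bot_free: "PF i Bot \<notin> H"
    and cut: "i \<in> indices H \<Longrightarrow> PF i a \<in> H \<or> PF i (Neg a) \<in> H"
    and and_sat: "PF i (And a b) \<in> H \<Longrightarrow> PF i a \<in> H \<and> PF i b \<in> H"
    and nand_sat: "PF i (Neg (And a b)) \<in> H \<Longrightarrow> PF i (Neg a) \<in> H \<or> PF i (Neg b) \<in> H"
    and or_sat: "PF i (Or a b) \<in> H \<Longrightarrow> PF i a \<in> H \<or> PF i b \<in> H"
    and nor_sat: "PF i (Neg (Or a b)) \<in> H \<Longrightarrow> PF i (Neg a) \<in> H \<and> PF i (Neg b) \<in> H"
    and imp_sat: "PF i (Imp a b) \<in> H \<Longrightarrow> PF i (Neg a) \<in> H \<or> PF i b \<in> H"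
    and nimp_sat: "PF i (Neg (Imp a b)) \<in> H \<Longrightarrow> PF i a \<in> H \<and> PF i (Neg b) \<in> H"
    and box_sat: "PF i (Box a b) \<in> H \<Longrightarrow> Rel i a j \<in> H \<Longrightarrow> PF j b \<in> H"
    and nbox_sat: "PF i (Neg (Box a b)) \<in> H \<Longrightarrow> \<exists>j. Rel i a j \<in> H \<and> PF j (Neg b) \<in> H"
    and dia_sat: "PF i (Dia a b) \<in> H \<Longrightarrow> \<exists>j. Rel i a j \<in> H \<and> PF j b \<in> H"
    and ndia_sat: "PF i (Neg (Dia a b)) \<in> H \<Longrightarrow> Rel i a j \<in> H \<Longrightarrow> PF j (Neg b) \<in> H"
    and ea_sat: "Rel i a j \<in> H \<Longrightarrow> (\<exists>k. PF k (Neg a) \<in> H \<and> PF k b \<in> H) \<or>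
      (\<exists>k. PF k a \<in> H \<and> PF k (Neg b) \<in> H) \<or> Rel i b j \<in> H"

lemma limit_branch_hintikka:
  assumes "\<not> closable G \<phi> {}"
  shows "ck_hintikka (limit_branch G \<phi>)"
proof
  let ?H = "limit_branch G \<phi>"
  note realises = limit_branch_realises_pair[OF assms]
  show "PF i (Neg a) \<notin> ?H" if "PF i a \<in> ?H" for i a
    using limit_branch_not_closed[OF assms, of "{PF i a, PF i (Neg a)}"] that
    unfolding closed_branch_def by blast
  show "PF i Bot \<notin> ?H" for i
    using limit_branch_not_closed[OF assms, of "{PF i Bot}"] unfolding closed_branch_def by blast
  show "PF i a \<in> ?H \<or> PF i (Neg a) \<in> ?H" if i: "i \<in> indices ?H" for i a
  proof -
    obtain x where x: "x \<in> ?H" "i \<in> indices {x}"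
      using i unfolding indices_def by blast
    have "i \<in> indices B" if "x \<in> B" for B
      using x(2) indices_mono[of "{x}" B] that by blast
    then show ?thesis using realises[OF x(1) x(1), of "CutR i a"] by (auto split: if_splits)
  qed
  show "PF i a \<in> ?H \<and> PF i b \<in> ?H" if "PF i (And a b) \<in> ?H" for i a b
    using realises[OF that that, of "AndR i a b"] by (auto split: if_splits)
  show "PF i (Neg a) \<in> ?H \<or> PF i (Neg b) \<in> ?H" if "PF i (Neg (And a b)) \<in> ?H" for i a b
    using realises[OF that that, of "NandR i a b"] by (auto split: if_splits)
  show "PF i a \<in> ?H \<or> PF i b \<in> ?H" if "PF i (Or a b) \<in> ?H" for i a b
    using realises[OF that that, of "OrR i a b"] by (auto split: if_splits)
  show "PF i (Neg a) \<in> ?H \<and> PF i (Neg b) \<in> ?H" if "PF i (Neg (Or a b)) \<in> ?H" for i a b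
    using realises[OF that that, of "NorR i a b"] by (auto split: if_splits)
  show "PF i (Neg a) \<in> ?H \<or> PF i b \<in> ?H" if "PF i (Imp a b) \<in> ?H" for i a b
    using realises[OF that that, of "ImpR i a b"] by (auto split: if_splits)
  show "PF i a \<in> ?H \<and> PF i (Neg b) \<in> ?H" if "PF i (Neg (Imp a b)) \<in> ?H" for i a b
    using realises[OF that that, of "NimpR i a b"] by (auto split: if_splits)
  show "PF j b \<in> ?H" if "PF i (Box a b) \<in> ?H" "Rel i a j \<in> ?H" for i a b j
    using realises[OF that, of "BoxR i a b j"] by (auto split: if_splits)
  show "\<exists>j. Rel i a j \<in> ?H \<and> PF j (Neg b) \<in> ?H" if "PF i (Neg (Box a b)) \<in> ?H" for i a b
    using realises[OF that that, of "NboxR i a b"] by (auto split: if_splits)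
  show "\<exists>j. Rel i a j \<in> ?H \<and> PF j b \<in> ?H" if "PF i (Dia a b) \<in> ?H" for i a b
    using realises[OF that that, of "DiaR i a b"] by (auto split: if_splits)
  show "PF j (Neg b) \<in> ?H" if "PF i (Neg (Dia a b)) \<in> ?H" "Rel i a j \<in> ?H" for i a b j
    using realises[OF that, of "NdiaR i a b j"] by (auto split: if_splits)
  show "(\<exists>k. PF k (Neg a) \<in> ?H \<and> PF k b \<in> ?H) \<or> (\<exists>k. PF k a \<in> ?H \<and> PF k (Neg b) \<in> ?H)
      \<or> Rel i b j \<in> ?H" if "Rel i a j \<in> ?H" for i a j b
    using realises[OF that that, of "EaR i a j b"] by (auto split: if_splits)
qed

context ck_hintikka
begin

definition truth_set :: "fm \<Rightarrow> nat set" where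
  "truth_set a = {i. PF i a \<in> H}"

definition canonical_rel :: "nat set \<Rightarrow> (nat \<times> nat) set" where
  "canonical_rel S = {(i, j). \<exists>a. truth_set a = S \<and> Rel i a j \<in> H}"

abbreviation canonical_val :: "nat \<Rightarrow> nat set" where
  "canonical_val \<equiv> \<lambda>p. truth_set (Var p)"

lemma truth_set_subset: "truth_set a \<subseteq> indices H"
  unfolding truth_set_def indices_def by blast

lemma truth_set_Neg: "truth_set (Neg a) = indices H - truth_set a"
  using cut consistent truth_set_subset unfolding truth_set_def by blast

lemma truth_set_Bot: "truth_set Bot = {}"
  using bot_free unfolding truth_set_def by blast

lemma truth_set_And: "truth_set (And a b) = truth_set a \<inter> truth_set b"
  using and_sat nand_sat cut consistent truth_set_subset unfolding truth_set_def by blast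

lemma truth_set_Or: "truth_set (Or a b) = truth_set a \<union> truth_set b"
  using or_sat nor_sat cut consistent truth_set_subset unfolding truth_set_def by blast

lemma truth_set_Imp: "truth_set (Imp a b) = (indices H - truth_set a) \<union> truth_set b"
  using imp_sat nimp_sat cut consistent truth_set_subset unfolding truth_set_def by blast

text \<open>This is where rule ea is needed: it makes the edges of the canonical model depend only on
  the truth set of their label.\<close>
lemma Rel_truth_set_cong:
  assumes "truth_set a = truth_set b" "Rel i b j \<in> H"
  shows "Rel i a j \<in> H"
  using ea_sat[OF assms(2), of a] assms(1) consistent unfolding truth_set_def by blast

lemma canonical_rel_Image: "canonical_rel (truth_set a) `` {i} = {j. Rel i a j \<in> H}"
  unfolding canonical_rel_def by (auto intro: Rel_truth_set_cong)

lemma Box_in_iff: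
  assumes "i \<in> indices H"
  shows "PF i (Box a b) \<in> H \<longleftrightarrow> (\<forall>j. Rel i a j \<in> H \<longrightarrow> PF j b \<in> H)"
  using box_sat nbox_sat cut[OF assms, of "Box a b"] consistent by blast

lemma Dia_in_iff:
  assumes "i \<in> indices H"
  shows "PF i (Dia a b) \<in> H \<longleftrightarrow> (\<exists>j. Rel i a j \<in> H \<and> PF j b \<in> H)"
  using dia_sat ndia_sat cut[OF assms, of "Dia a b"] consistent by blast

lemma truth_set_Box:
  "{i \<in> indices H. canonical_rel (truth_set a) `` {i} \<subseteq> truth_set b} = truth_set (Box a b)"
proof -
  have "{i \<in> indices H. canonical_rel (truth_set a) `` {i} \<subseteq> truth_set b}
      = {i \<in> indices H. \<forall>j. Rel i a j \<in> H \<longrightarrow> PF j b \<in> H}"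
    by (simp only: canonical_rel_Image) (auto simp: truth_set_def)
  also have "\<dots> = {i \<in> indices H. PF i (Box a b) \<in> H}"
    using Box_in_iff by blast
  finally show ?thesis using truth_set_subset[of "Box a b"] unfolding truth_set_def by blast
qed

lemma truth_set_Dia:
  "{i \<in> indices H. canonical_rel (truth_set a) `` {i} \<inter> truth_set b \<noteq> {}} = truth_set (Dia a b)"
proof -
  have "{i \<in> indices H. canonical_rel (truth_set a) `` {i} \<inter> truth_set b \<noteq> {}}
      = {i \<in> indices H. \<exists>j. Rel i a j \<in> H \<and> PF j b \<in> H}"
    by (simp only: canonical_rel_Image) (auto simp: truth_set_def)
  also have "\<dots> = {i \<in> indices H. PF i (Dia a b) \<in> H}"
    using Dia_in_iff by blast
  finally show ?thesis using truth_set_subset[of "Dia a b"] unfolding truth_set_def by blast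
qed

lemma canonical_rel_subset: "canonical_rel S \<subseteq> indices H \<times> indices H"
  unfolding canonical_rel_def indices_def by blast

lemma canonical_model:
  assumes "indices H \<noteq> {}"
  shows "segerberg_model (indices H) (range truth_set) canonical_rel canonical_val"
  unfolding segerberg_model_def
proof (intro conjI ballI allI)
  show "range truth_set \<subseteq> Pow (indices H)" using truth_set_subset by blast
  show "{} \<in> range truth_set" using truth_set_Bot by (metis rangeI)
  show "indices H \<in> range truth_set"
    using truth_set_Neg[of Bot] truth_set_Bot by (metis rangeI Diff_empty)
  show "indices H - S \<in> range truth_set" if "S \<in> range truth_set" for S
    using that truth_set_Neg by blast
  show "S \<inter> T \<in> range truth_set" "S \<union> T \<in> range truth_set"
    if "S \<in> range truth_set" "T \<in> range truth_set" for S T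
    using that truth_set_And truth_set_Or by blast+
  show "{x \<in> indices H. canonical_rel S `` {x} \<subseteq> T} \<in> range truth_set"
    if "S \<in> range truth_set" "T \<in> range truth_set" for S T
    using that truth_set_Box by blast
qed (use assms canonical_rel_subset in auto)

lemma sat_canonical_eq_truth_set:
  "{i \<in> indices H. sat (indices H) canonical_rel canonical_val a i} = truth_set a"
proof (induction a)
  case (Var p)
  show ?case using truth_set_subset by auto
next
  case Bot
  show ?case by (simp add: truth_set_Bot)
next
  case (Neg a)
  then show ?case using truth_set_Neg by auto
next
  case (Imp a b)
  then show ?case using truth_set_Imp by auto
next
  case (And a b)
  then show ?case using truth_set_And by auto
next
  case (Or a b)
  then show ?case using truth_set_Or by auto
next
  case (Box a b)
  show ?case
    unfolding sat.simps Box.IH(1) truth_set_Box[symmetric]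
    using Box.IH(2) canonical_rel_subset by blast
next
  case (Dia a b)
  show ?case
    unfolding sat.simps Dia.IH(1) truth_set_Dia[symmetric]
    using Dia.IH(2) canonical_rel_subset by blast
qed

lemma truth_lemma:
  "i \<in> indices H \<Longrightarrow>
   sat (indices H) canonical_rel canonical_val a i \<longleftrightarrow> PF i a \<in> H"
  using sat_canonical_eq_truth_set[of a] unfolding truth_set_def by blast

end

theorem mainTheorem6:
  fixes \<Gamma> :: "fm set" and \<phi> :: fm
  assumes "ck_entails TYPE(nat) \<Gamma> \<phi>"
  shows "ck_derivable \<Gamma> \<phi>"
proof (rule ccontr)
  assume "\<not> ck_derivable \<Gamma> \<phi>"
  then have open_root: "\<not> closable \<Gamma> \<phi> {}" unfolding ck_derivable_def .
  let ?H = "limit_branch \<Gamma> \<phi>"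
  interpret ck_hintikka ?H using limit_branch_hintikka[OF open_root] .
  have neg: "PF 1 (Neg \<phi>) \<in> ?H" unfolding limit_branch_def by (rule UN_I[of 0]) simp_all
  then have root: "1 \<in> indices ?H" unfolding indices_def by blast
  have "\<forall>\<psi>\<in>\<Gamma>. sat (indices ?H) canonical_rel canonical_val \<psi> 1"
    using truth_lemma[OF root] limit_branch_assumption[OF open_root] by blast
  then have "sat (indices ?H) canonical_rel canonical_val \<phi> 1"
    using assms canonical_model root unfolding ck_entails_def by blast
  then show False using truth_lemma[OF root] neg consistent by blast
qed

end
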